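(* Let $H$, $B$, $b$, $V$, $A(\cdot)$, $\|A\|$ be as in the context, let $c>0$ and $\gamma=cI$. Assume $$\|A\|<c\sqrt{b+\tfrac{c^2}{4}}-\tfrac{c^2}{2}.$$ Then there exist constants $\delta>0$ and $M>0$ such that every (mild) solution $u$ of $$u''(t)+\big[B+A(t)\big]u(t)+c\,u'(t)=0,\quad t\ge 0,\qquad u(0)=u_0\in V,\ u'(0)=u_1\in H,$$ satisfies $$\|u(t)\|^2+|u'(t)|^2\le M\big[\|u(s)\|^2+|u'(s)|^2\big]e^{-\delta(t-s)}\quad\text{whenever } 0\le s\le t.$$
   Context: $H$ is a real Hilbert space with inner product $\langle\cdot,\cdot\rangle$ and norm $|\cdot|$. $B$ is a self-adjoint linear operator on $H$ with dense domain, coercive: there is $b>0$ with $\langle Bv,v\rangle\ge b|v|^2$ for all $v$ in its domain. $V=D(B^{1/2})$ with norm $\|v\|=|B^{1/2}v|$; $V'$ is its dual and $B$ is identified with its extension in $L(V,V')$. $A\in L^\infty(\mathbb{R}^+,L(H))$ and $\|A\|=\operatorname{ess\,sup}_{t\ge0}\|A(t)\|_{L(H)}$. A mild solution is a function $u\in C([0,\infty),V)\cap C^1([0,\infty),H)\cap W^{2,\infty}_{\mathrm{loc}}([0,\infty),V')$ satisfying the equation in $V'$ for a.e. $t$ and the initial conditions. *)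

theory Defs
  imports "HOL-Analysis.Analysis"
begin

text \<open>Unbounded linear operators on a real Hilbert space are represented by a
  domain D and a function T (whose values outside D are irrelevant).\<close>

definition linear_op_on :: "'a::real_inner set \<Rightarrow> ('a \<Rightarrow> 'a) \<Rightarrow> bool" where
  "linear_op_on D T \<longleftrightarrow> subspace D \<and>
     (\<forall>x\<in>D. \<forall>y\<in>D. T (x + y) = T x + T y) \<and> (\<forall>r. \<forall>x\<in>D. T (r *\<^sub>R x) = r *\<^sub>R T x)"

definition adjoint_domain :: "'a::real_inner set \<Rightarrow> ('a \<Rightarrow> 'a) \<Rightarrow> 'a set" where
  "adjoint_domain D T = {y. \<exists>z. \<forall>x\<in>D. inner (T x) y = inner x z}"

definition self_adjoint_op :: "'a::real_inner set \<Rightarrow> ('a \<Rightarrow> 'a) \<Rightarrow> bool" where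
  "self_adjoint_op D T \<longleftrightarrow> linear_op_on D T \<and> closure D = UNIV \<and>
     (\<forall>x\<in>D. \<forall>y\<in>D. inner (T x) y = inner x (T y)) \<and> adjoint_domain D T = D"

text \<open>(DS, S) is the square root B^(1/2) of (DB, B): the nonnegative self-adjoint
  operator with S o S = B (as operators, including domains).  It exists and is
  unique for every nonnegative self-adjoint B.\<close>
definition is_sqrt_op :: "'a::real_inner set \<Rightarrow> ('a \<Rightarrow> 'a) \<Rightarrow> 'a set \<Rightarrow> ('a \<Rightarrow> 'a) \<Rightarrow> bool" where
  "is_sqrt_op DS S DB B \<longleftrightarrow> self_adjoint_op DS S \<and> (\<forall>x\<in>DS. 0 \<le> inner (S x) x) \<and>
     DB = {x\<in>DS. S x \<in> DS} \<and> (\<forall>x\<in>DB. B x = S (S x))"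

text \<open>Mild solution of u'' + [B + A(t)] u + c u' = 0, u(0) = u0, u'(0) = u1,
  with V = DS, norm on V given by |S v|.  u' is the derivative of u.
  The equation in V' is expressed by testing against every v in V:
  the V'-valued function u' satisfies
  u'(t) = u1 - int_0^t (B u + A u + c u') ds  in V' (this is equivalent to
  u' in W^{1,inf}_loc(V') together with the equation a.e. in V').\<close>
definition mild_solution ::
  "'a::{real_inner,complete_space} set \<Rightarrow> ('a \<Rightarrow> 'a) \<Rightarrow> (real \<Rightarrow> 'a \<Rightarrow>\<^sub>L 'a) \<Rightarrow> real \<Rightarrow>
   'a \<Rightarrow> 'a \<Rightarrow> (real \<Rightarrow> 'a) \<Rightarrow> (real \<Rightarrow> 'a) \<Rightarrow> bool" where
  "mild_solution DS S A c u0 u1 u u' \<longleftrightarrow>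
     (\<forall>t\<ge>0. u t \<in> DS) \<and>
     continuous_on {0..} (\<lambda>t. S (u t)) \<and> continuous_on {0..} u \<and>
     (\<forall>t\<ge>0. (u has_vector_derivative u' t) (at t within {0..})) \<and>
     continuous_on {0..} u' \<and>
     u 0 = u0 \<and> u' 0 = u1 \<and>
     (\<forall>v\<in>DS. \<forall>t\<ge>0.
        (\<lambda>s. inner (S (u s)) (S v) + inner (blinfun_apply (A s) (u s)) v + c * inner (u' s) v)
          integrable_on {0..t} \<and>
        inner (u' t) v = inner u1 v -
          integral {0..t} (\<lambda>s. inner (S (u s)) (S v) + inner (blinfun_apply (A s) (u s)) v
                                 + c * inner (u' s) v))"

end

theory Submission
  imports Defs
begin

text \<open>The energy \<open>E = |u'|^2 + |B^(1/2) u|^2 + c <u', u> + c^2/2 |u|^2\<close> is equivalent to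
  \<open>|B^(1/2) u|^2 + |u'|^2\<close> and formally satisfies \<open>E' <= - d E\<close> with
  \<open>d = c - (c^2 + 2 K) / (2 sqrt (b + c^2/4))\<close>, which is positive exactly under the smallness
  assumption on \<open>K = ||A||\<close>.  A mild solution is too rough to differentiate \<open>E\<close>, so \<open>u'\<close> and
  \<open>B^(1/2) u\<close> are replaced by difference quotients of \<open>u\<close> and of a primitive of
  \<open>B^(1/2) u\<close>.  Testing the weak equation against \<open>2 z + c u\<close>, where \<open>z\<close> is the difference
  quotient of \<open>u\<close>, bounds the derivative of the regularised energy; dominated convergence then
  yields \<open>E(t) - E(s) <= - d * integral E\<close> over \<open>[s, t]\<close>, so \<open>E\<close> halves on every interval of
  length \<open>1/d\<close>.\<close>

section \<open>Integration of Hilbert-space valued functions\<close>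

text \<open>Henstock-Kurzweil integration is developed for the type class \<open>banach\<close>, which a type
  variable of sort \<open>{real_inner, complete_space}\<close> does not belong to.  We integrate in an
  isomorphic copy of the space that is registered as a Banach space.\<close>

typedef (overloaded) ('a::"{real_inner,complete_space}") as_banach = "UNIV :: 'a set"
  by auto

setup_lifting type_definition_as_banach

instantiation as_banach :: ("{real_inner,complete_space}") real_inner
begin
lift_definition zero_as_banach :: "'a as_banach" is 0 .
lift_definition plus_as_banach :: "'a as_banach \<Rightarrow> 'a as_banach \<Rightarrow> 'a as_banach" is "(+)" .
lift_definition minus_as_banach :: "'a as_banach \<Rightarrow> 'a as_banach \<Rightarrow> 'a as_banach" is "(-)" .
lift_definition uminus_as_banach :: "'a as_banach \<Rightarrow> 'a as_banach" is uminus .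
lift_definition scaleR_as_banach :: "real \<Rightarrow> 'a as_banach \<Rightarrow> 'a as_banach" is scaleR .
lift_definition norm_as_banach :: "'a as_banach \<Rightarrow> real" is norm .
lift_definition inner_as_banach :: "'a as_banach \<Rightarrow> 'a as_banach \<Rightarrow> real" is inner .
lift_definition dist_as_banach :: "'a as_banach \<Rightarrow> 'a as_banach \<Rightarrow> real" is dist .
lift_definition sgn_as_banach :: "'a as_banach \<Rightarrow> 'a as_banach" is sgn .

definition uniformity_as_banach :: "('a as_banach \<times> 'a as_banach) filter"
  where "uniformity_as_banach = (INF e\<in>{0<..}. principal {(x, y). dist x y < e})"

definition open_as_banach :: "'a as_banach set \<Rightarrow> bool"
  where "open_as_banach U = (\<forall>x\<in>U. \<forall>\<^sub>F (x', y) in uniformity. x' = x \<longrightarrow> y \<in> U)"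

instance
  apply (intro_classes; ((simp add: uniformity_as_banach_def open_as_banach_def; fail)?))
  apply (transfer; simp add: algebra_simps scaleR_add_right scaleR_add_left dist_norm sgn_div_norm
      inner_commute inner_add_left norm_eq_sqrt_inner)+
  done

end

lemma dist_Rep_as_banach: "dist (Rep_as_banach x) (Rep_as_banach y) = dist x y"
  by transfer simp

lemma bounded_linear_Abs_as_banach: "bounded_linear Abs_as_banach"
proof
  fix x y :: 'a and r :: real
  show "Abs_as_banach (x + y) = Abs_as_banach x + Abs_as_banach y"
    by (simp add: plus_as_banach.abs_eq eq_onp_same_args)
  show "Abs_as_banach (r *\<^sub>R x) = r *\<^sub>R Abs_as_banach x"
    by (simp add: scaleR_as_banach.abs_eq eq_onp_same_args)
  show "\<exists>K. \<forall>x. norm (Abs_as_banach x) \<le> norm x * K"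
    by (rule exI[of _ 1]) (simp add: norm_as_banach.abs_eq eq_onp_same_args)
qed

lemma bounded_linear_Rep_as_banach: "bounded_linear Rep_as_banach"
proof
  fix x y :: "'a as_banach" and r :: real
  show "Rep_as_banach (x + y) = Rep_as_banach x + Rep_as_banach y" by transfer simp
  show "Rep_as_banach (r *\<^sub>R x) = r *\<^sub>R Rep_as_banach x" by transfer simp
  show "\<exists>K. \<forall>x::'a as_banach. norm (Rep_as_banach x) \<le> norm x * K"
    by (rule exI[of _ 1]) (transfer, simp)
qed

instance as_banach :: ("{real_inner,complete_space}") banach
proof
  fix X :: "nat \<Rightarrow> 'a as_banach"
  assume "Cauchy X"
  then have "Cauchy (\<lambda>n. Rep_as_banach (X n))"
    unfolding Cauchy_def by (simp add: dist_Rep_as_banach)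
  then obtain L where "(\<lambda>n. Rep_as_banach (X n)) \<longlonglongrightarrow> L"
    using Cauchy_convergent_iff convergent_def by blast
  then have "(\<lambda>n. Abs_as_banach (Rep_as_banach (X n))) \<longlonglongrightarrow> Abs_as_banach L"
    by (rule bounded_linear.tendsto[OF bounded_linear_Abs_as_banach])
  then show "convergent X"
    unfolding convergent_def by (auto simp: Rep_as_banach_inverse)
qed

definition hintegral :: "real set \<Rightarrow> (real \<Rightarrow> 'a::{real_inner,complete_space}) \<Rightarrow> 'a"
  where "hintegral T f = Rep_as_banach (integral T (\<lambda>x. Abs_as_banach (f x)))"

lemma continuous_on_Abs_as_banach:
  "continuous_on T f \<Longrightarrow> continuous_on T (\<lambda>x. Abs_as_banach (f x))"
  by (rule continuous_on_compose2[OF linear_continuous_on[OF bounded_linear_Abs_as_banach]]) auto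

lemma inner_hintegral:
  assumes "continuous_on {a..b} f"
  shows "inner (hintegral {a..b} f) w = integral {a..b} (\<lambda>x. inner (f x) w)"
proof -
  have "(\<lambda>x. Abs_as_banach (f x)) integrable_on {a..b}"
    by (intro integrable_continuous_interval continuous_on_Abs_as_banach assms)
  from integral_linear[OF this bounded_linear_inner_left, of "Abs_as_banach w"]
  show ?thesis
    unfolding hintegral_def o_def
    by (simp add: inner_as_banach.rep_eq Abs_as_banach_inverse)
qed

lemma hintegral_has_vector_derivative:
  assumes "continuous_on {a..b} f" "x \<in> {a..b}"
  shows "((\<lambda>s. hintegral {a..s} f) has_vector_derivative f x) (at x within {a..b})"
  using bounded_linear.has_vector_derivative[OF bounded_linear_Rep_as_banach
      integral_has_vector_derivative[OF continuous_on_Abs_as_banach[OF assms(1)] assms(2)]]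
  unfolding hintegral_def by (simp add: Abs_as_banach_inverse)

lemma continuous_on_hintegral:
  assumes "continuous_on {a..b} f"
  shows "continuous_on {a..b} (\<lambda>s. hintegral {a..s} f)"
  unfolding hintegral_def
  by (rule continuous_on_compose2[OF linear_continuous_on[OF bounded_linear_Rep_as_banach]])
    (auto intro: indefinite_integral_continuous_1 integrable_continuous_interval
      continuous_on_Abs_as_banach assms)

lemma hintegral_combine:
  assumes "a \<le> b" "b \<le> c" "continuous_on {a..c} f"
  shows "hintegral {a..c} f = hintegral {a..b} f + hintegral {b..c} f"
proof -
  have "(\<lambda>x. Abs_as_banach (f x)) integrable_on {a..c}"
    by (intro integrable_continuous_interval continuous_on_Abs_as_banach assms)
  from Henstock_Kurzweil_Integration.integral_combine[OF assms(1,2) this] show ?thesis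
    unfolding hintegral_def by (metis plus_as_banach.rep_eq)
qed

lemma norm_hintegral_le:
  assumes "a \<le> b" "continuous_on {a..b} f" "\<And>x. x \<in> {a..b} \<Longrightarrow> norm (f x) \<le> M"
  shows "norm (hintegral {a..b} f) \<le> M * (b - a)"
proof -
  have "norm (integral {a..b} (\<lambda>x. Abs_as_banach (f x))) \<le> M * (b - a)"
    using assms by (intro integral_bound continuous_on_Abs_as_banach)
      (auto simp: norm_as_banach.abs_eq eq_onp_same_args)
  then show ?thesis
    unfolding hintegral_def by (simp add: norm_as_banach.rep_eq)
qed

lemma LIMSEQ_one_over_real_add_1: "(\<lambda>n. 1 / (real n + 1)) \<longlonglongrightarrow> 0"
  using LIMSEQ_inverse_real_of_nat by (simp add: inverse_eq_divide add.commute)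

lemma AE_norm_le_imp_nonneg:
  fixes A :: "real \<Rightarrow> 'a::real_normed_vector"
  assumes "AE t in lborel. 0 \<le> t \<longrightarrow> norm (A t) \<le> K"
  shows "0 \<le> K"
proof (rule ccontr)
  assume "\<not> 0 \<le> K"
  have "AE t in lborel. t < (0::real)"
  proof (rule eventually_mono[OF assms])
    fix t :: real
    assume "0 \<le> t \<longrightarrow> norm (A t) \<le> K"
    then show "t < 0"
      using \<open>\<not> 0 \<le> K\<close> norm_ge_zero[of "A t"] by linarith
  qed
  then obtain N where N: "{t. \<not> t < (0::real)} \<subseteq> N" "emeasure lborel N = 0" "N \<in> sets lborel"
    by (auto elim!: AE_E)
  have "emeasure lborel {0..1::real} \<le> emeasure lborel N"
    using N by (intro emeasure_mono) auto
  then show False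
    using N(2) by simp
qed

lemma continuous_on_subset_nonneg:
  fixes f :: "real \<Rightarrow> 'b::topological_space"
  shows "continuous_on {0..} f \<Longrightarrow> 0 \<le> a \<Longrightarrow> continuous_on {a..b} f"
  by (erule continuous_on_subset) auto

lemma bounded_on_interval:
  fixes f :: "real \<Rightarrow> 'b::real_normed_vector"
  assumes "continuous_on {0..} f"
  obtains M where "\<And>x. x \<in> {0..T} \<Longrightarrow> norm (f x) \<le> M"
proof -
  have "compact (f ` {0..T})"
    using assms by (intro compact_continuous_image continuous_on_subset_nonneg) auto
  then show ?thesis
    using that compact_imp_bounded bounded_iff by (metis image_eqI)
qed

definition diff_quot :: "(real \<Rightarrow> 'a::real_vector) \<Rightarrow> real \<Rightarrow> real \<Rightarrow> 'a" where
  "diff_quot f h t = (1 / h) *\<^sub>R (f (t + h) - f t)"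

lemma diff_quot_LIMSEQ:
  fixes f :: "real \<Rightarrow> 'a::real_normed_vector"
  assumes "(f has_vector_derivative f') (at t within T)"
    and "\<And>n. h n > 0" "\<And>n. t + h n \<in> T" "h \<longlonglongrightarrow> 0"
  shows "(\<lambda>n. diff_quot f (h n) t) \<longlonglongrightarrow> f'"
proof -
  have lim: "((\<lambda>y. (1 / norm (y - t)) *\<^sub>R (f y - (f t + (y - t) *\<^sub>R f'))) \<longlongrightarrow> 0) (at t within T)"
    using assms(1) unfolding has_vector_derivative_def has_derivative_within by blast
  have to_t: "filterlim (\<lambda>n. t + h n) (at t within T) sequentially"
    unfolding filterlim_at
  proof
    show "\<forall>\<^sub>F n in sequentially. t + h n \<in> T \<and> t + h n \<noteq> t"
      using assms(2,3) by (intro always_eventually) (metis add_cancel_left_right less_irrefl)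
    show "(\<lambda>n. t + h n) \<longlonglongrightarrow> t"
      using tendsto_add[OF tendsto_const assms(4), of t] by simp
  qed
  have "(1 / norm (t + h n - t)) *\<^sub>R (f (t + h n) - (f t + (t + h n - t) *\<^sub>R f'))
      = diff_quot f (h n) t - f'" for n
    using assms(2)[of n] by (simp add: diff_quot_def algebra_simps)
  with filterlim_compose[OF lim to_t]
  have "(\<lambda>n. diff_quot f (h n) t - f') \<longlonglongrightarrow> 0"
    by simp
  then show ?thesis
    by (rule LIM_zero_cancel)
qed

lemma has_vector_derivative_shift:
  assumes "(f has_vector_derivative f') (at (t + h))"
  shows "((\<lambda>s. f (s + h)) has_vector_derivative f') (at t)"
proof -
  have "((\<lambda>s. s + h) has_vector_derivative 1) (at t)"
    by (auto intro!: derivative_eq_intros simp flip: has_real_derivative_iff_has_vector_derivative)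
  from vector_diff_chain_at[OF this] assms show ?thesis
    by (simp add: o_def)
qed

lemma diff_quot_has_vector_derivative:
  assumes "(f has_vector_derivative f' t) (at t)" "(f has_vector_derivative f' (t + h)) (at (t + h))"
  shows "(diff_quot f h has_vector_derivative diff_quot f' h t) (at t)"
  unfolding diff_quot_def[abs_def]
  by (intro bounded_linear.has_vector_derivative[OF bounded_linear_scaleR_right]
      has_vector_derivative_diff has_vector_derivative_shift assms)

lemma continuous_on_diff_quot:
  fixes f :: "real \<Rightarrow> 'a::real_normed_vector"
  assumes "continuous_on {a..b + h} f" "0 \<le> h"
  shows "continuous_on {a..b} (diff_quot f h)"
proof -
  have "continuous_on {a..b} (\<lambda>s. f (s + h))"
    using assms by (intro continuous_on_compose2[OF assms(1)] continuous_intros) auto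
  moreover have "continuous_on {a..b} f"
    by (rule continuous_on_subset[OF assms(1)]) (use assms(2) in auto)
  ultimately show ?thesis
    unfolding diff_quot_def[abs_def] by (intro continuous_intros)
qed

lemma diff_le_integral_if_DERIV_le:
  fixes f g :: "real \<Rightarrow> real"
  assumes "a \<le> b" "continuous_on {a..b} f" "continuous_on {a..b} g"
    and "\<And>x. a < x \<Longrightarrow> x < b \<Longrightarrow> \<exists>D. (f has_real_derivative D) (at x) \<and> D \<le> g x"
  shows "f b - f a \<le> integral {a..b} g"
proof -
  define F where "F x = f x - integral {a..x} g" for x
  have "F b \<le> F a"
  proof (rule DERIV_nonpos_imp_decreasing_open[OF assms(1)])
    show "continuous_on {a..b} F"
      unfolding F_def using assms(2,3)
      by (intro continuous_intros indefinite_integral_continuous_1 integrable_continuous_interval)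
    fix x
    assume x: "a < x" "x < b"
    then obtain D where D: "(f has_real_derivative D) (at x)" "D \<le> g x"
      using assms(4) by blast
    have "((\<lambda>x. integral {a..x} g) has_vector_derivative g x) (at x within {a..b})"
      using x by (intro integral_has_vector_derivative assms(3)) auto
    moreover have "at x within {a..b} = at x"
      using x by (intro at_within_interior) auto
    ultimately have "((\<lambda>x. integral {a..x} g) has_real_derivative g x) (at x)"
      by (simp add: has_real_derivative_iff_has_vector_derivative)
    then have "(F has_real_derivative D - g x) (at x)"
      unfolding F_def by (intro DERIV_diff D(1))
    then show "\<exists>y. (F has_real_derivative y) (at x) \<and> y \<le> 0"
      using D(2) by auto
  qed
  then show ?thesis
    unfolding F_def by simp
qed

lemma inverse_power_floor_le_exp:
  fixes x :: real
  assumes "0 \<le> x"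
  shows "1 / 2 ^ nat \<lfloor>x\<rfloor> \<le> 2 * exp (- (ln 2 * x))"
proof -
  have "x - 1 < real (nat \<lfloor>x\<rfloor>)"
    using assms by linarith
  then have "- (ln 2 * real (nat \<lfloor>x\<rfloor>)) \<le> ln 2 + - (ln 2 * x)"
    using mult_left_mono[of "x - 1" "real (nat \<lfloor>x\<rfloor>)" "ln 2"] by (simp add: algebra_simps)
  then have "exp (- (ln 2 * real (nat \<lfloor>x\<rfloor>))) \<le> exp (ln 2 + - (ln 2 * x))"
    by simp
  moreover have "exp (real (nat \<lfloor>x\<rfloor>) * ln 2) = 2 ^ nat \<lfloor>x\<rfloor>"
    by (simp add: exp_of_nat_mult)
  then have "exp (- (ln 2 * real (nat \<lfloor>x\<rfloor>))) = 1 / 2 ^ nat \<lfloor>x\<rfloor>"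
    by (simp add: exp_minus mult.commute inverse_eq_divide)
  moreover have "exp (ln 2 + - (ln 2 * x)) = 2 * exp (- (ln 2 * x))"
    by (simp only: exp_add) simp
  ultimately show ?thesis
    by simp
qed

context
  fixes \<phi> :: "real \<Rightarrow> real" and d :: real
  assumes cont: "continuous_on {0..} \<phi>" and nonneg: "\<And>t. 0 \<le> t \<Longrightarrow> 0 \<le> \<phi> t" and d: "0 < d"
    and ineq: "\<And>a b. 0 \<le> a \<Longrightarrow> a \<le> b \<Longrightarrow> \<phi> b - \<phi> a \<le> - d * integral {a..b} \<phi>"
begin

private lemma integrable: "0 \<le> a \<Longrightarrow> \<phi> integrable_on {a..b}"
  by (intro integrable_continuous_interval continuous_on_subset[OF cont]) auto

private lemma antimono:
  assumes "0 \<le> a" "a \<le> b"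
  shows "\<phi> b \<le> \<phi> a"
proof -
  have "0 \<le> integral {a..b} \<phi>"
    using nonneg assms by (intro integral_nonneg integrable) auto
  then show ?thesis
    using ineq[OF assms] mult_nonneg_nonneg[of d "integral {a..b} \<phi>"] d by linarith
qed

private lemma halving:
  assumes "0 \<le> a"
  shows "\<phi> (a + real n / d) \<le> \<phi> a / 2 ^ n"
proof (induction n)
  case (Suc n)
  define x where "x = a + real n / d"
  have "0 \<le> x"
    unfolding x_def using assms d by simp
  have "integral {x..x + 1 / d} (\<lambda>_. \<phi> (x + 1 / d)) \<le> integral {x..x + 1 / d} \<phi>"
    using \<open>0 \<le> x\<close> d antimono by (intro integral_le integrable) auto
  then have "\<phi> (x + 1 / d) / d \<le> integral {x..x + 1 / d} \<phi>"
    using d by simp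
  then have "\<phi> (x + 1 / d) \<le> \<phi> x / 2"
    using ineq[of x "x + 1 / d"] \<open>0 \<le> x\<close> d by (simp add: field_simps)
  moreover have "a + real (Suc n) / d = x + 1 / d"
    unfolding x_def by (simp add: add_divide_distrib)
  ultimately have "\<phi> (a + real (Suc n) / d) \<le> \<phi> x / 2"
    by simp
  also have "\<dots> \<le> \<phi> a / 2 ^ n / 2"
    using Suc.IH unfolding x_def by (simp add: divide_right_mono)
  finally show ?case
    by simp
qed simp

lemma integral_inequality_imp_exp_decay:
  assumes "0 \<le> s" "s \<le> t"
  shows "\<phi> t \<le> 2 * exp (- (ln 2 * d) * (t - s)) * \<phi> s"
proof -
  define n where "n = nat \<lfloor>d * (t - s)\<rfloor>"
  have "s + real n / d \<le> t"
    unfolding n_def using assms d by (simp add: field_simps) linarith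
  then have "\<phi> t \<le> \<phi> (s + real n / d)"
    using assms d by (intro antimono) auto
  also have "\<dots> \<le> (1 / 2 ^ n) * \<phi> s"
    using halving[OF assms(1), of n] by simp
  also have "\<dots> \<le> 2 * exp (- (ln 2 * (d * (t - s)))) * \<phi> s"
    unfolding n_def using assms d nonneg[of s]
    by (intro mult_right_mono inverse_power_floor_le_exp) auto
  finally show ?thesis
    by (simp add: algebra_simps)
qed

end

lemma has_real_derivative_inner:
  assumes "(f has_vector_derivative f') (at x)" "(g has_vector_derivative g') (at x)"
  shows "((\<lambda>t. inner (f t) (g t)) has_real_derivative (inner f' (g x) + inner (f x) g')) (at x)"
proof -
  have "((\<lambda>t. inner (f t) (g t)) has_derivative (*) (inner f' (g x) + inner (f x) g')) (at x)"
    by (rule has_derivative_eq_rhs[OF has_derivative_inner[OF assms[unfolded has_vector_derivative_def]]])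
      (simp add: fun_eq_iff algebra_simps)
  then show ?thesis
    by (simp add: has_field_derivative_def)
qed

section \<open>Nearest points in Hilbert spaces\<close>

lemma Cauchy_if_dist_le_add:
  fixes X :: "nat \<Rightarrow> 'a::metric_space"
  assumes "\<And>m n. dist (X m) (X n) \<le> f m + f n" "f \<longlonglongrightarrow> 0"
  shows "Cauchy X"
proof (rule metric_CauchyI)
  fix e :: real
  assume "e > 0"
  then obtain N where N: "\<And>n. n \<ge> N \<Longrightarrow> norm (f n) < e / 2"
    using LIMSEQ_D[OF assms(2), of "e/2"] by auto
  show "\<exists>M. \<forall>m\<ge>M. \<forall>n\<ge>M. dist (X m) (X n) < e"
  proof (intro exI allI impI)
    fix m n
    assume "m \<ge> N" "n \<ge> N"
    then have "f m < e / 2" "f n < e / 2"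
      using N[of m] N[of n] by auto
    then show "dist (X m) (X n) < e"
      using assms(1)[of m n] by linarith
  qed
qed

lemma norm_diff_midpoint:
  fixes w p q :: "'a::real_inner"
  shows "(norm (p - q))\<^sup>2
    = 2 * (norm (w - p))\<^sup>2 + 2 * (norm (w - q))\<^sup>2 - 4 * (norm (w - (1/2) *\<^sub>R (p + q)))\<^sup>2"
  unfolding power2_norm_eq_inner
  by (simp add: inner_add_left inner_add_right inner_diff_left inner_diff_right inner_commute
      algebra_simps)

lemma dist_sq_le_if_near_infdist:
  fixes C :: "'a::real_inner set"
  assumes "convex C" "y \<in> C" "z \<in> C"
    and "dist w y \<le> infdist w C + e" "dist w z \<le> infdist w C + e'"
    and "0 \<le> e" "e \<le> 1" "0 \<le> e'" "e' \<le> 1"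
  shows "(dist y z)\<^sup>2 \<le> (4 * infdist w C + 2) * (e + e')"
proof -
  define d where "d = infdist w C"
  have "0 \<le> d"
    unfolding d_def by (rule infdist_nonneg)
  have "(1/2) *\<^sub>R (y + z) \<in> C"
    using convexD[OF assms(1-3), of "1/2" "1/2"] by (simp add: scaleR_right_distrib)
  then have "2 * d \<le> 2 * norm (w - (1/2) *\<^sub>R (y + z))"
    unfolding d_def using infdist_le[of _ C w] by (simp add: dist_norm)
  then have "(2 * d)\<^sup>2 \<le> 4 * (norm (w - (1/2) *\<^sub>R (y + z)))\<^sup>2"
    using power_mono[of "2 * d" _ 2] \<open>0 \<le> d\<close> by (simp add: power_mult_distrib)
  moreover have "(norm (w - y))\<^sup>2 \<le> (d + e)\<^sup>2" "(norm (w - z))\<^sup>2 \<le> (d + e')\<^sup>2"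
    using assms(4,5) unfolding d_def by (simp_all add: dist_norm power_mono)
  ultimately have "(dist y z)\<^sup>2 \<le> 2 * (d + e)\<^sup>2 + 2 * (d + e')\<^sup>2 - (2 * d)\<^sup>2"
    using norm_diff_midpoint[of y z w] unfolding dist_norm by (smt (verit))
  also have "\<dots> = 4 * d * (e + e') + 2 * e\<^sup>2 + 2 * e'\<^sup>2"
    by (simp add: power2_eq_square algebra_simps)
  also have "\<dots> \<le> (4 * d + 2) * (e + e')"
  proof -
    have "e\<^sup>2 \<le> e" "e'\<^sup>2 \<le> e'"
      using assms(6-9) by (simp_all add: power2_eq_square mult_le_cancel_left1 mult_left_le_one_le)
    then show ?thesis
      by (simp add: algebra_simps)
  qed
  finally show ?thesis
    unfolding d_def .
qed

lemma closed_convex_nearest_point: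
  fixes C :: "'a::{real_inner,complete_space} set"
  assumes "closed C" "convex C" "C \<noteq> {}"
  obtains m where "m \<in> C" "\<And>y. y \<in> C \<Longrightarrow> dist w m \<le> dist w y"
proof -
  define d where "d = infdist w C"
  define e where "e n = 1 / (real n + 1)" for n
  have e: "e \<longlonglongrightarrow> 0" "\<And>n. 0 < e n" "\<And>n. e n \<le> 1"
    unfolding e_def using LIMSEQ_one_over_real_add_1 by auto
  have "\<exists>y\<in>C. dist w y < d + e n" for n
    using cInf_lessD[of "dist w ` C" "d + e n"] assms(3) e(2)[of n]
    unfolding d_def infdist_notempty[OF assms(3)] by auto
  then obtain y where y: "\<And>n. y n \<in> C" "\<And>n. dist w (y n) \<le> d + e n"
    by (metis less_imp_le)
  define f where "f n = sqrt ((4 * d + 2) * e n)" for n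
  have "0 \<le> d"
    unfolding d_def by (rule infdist_nonneg)
  have "dist (y m) (y n) \<le> f m + f n" for m n
  proof -
    have "(dist (y m) (y n))\<^sup>2 \<le> (4 * d + 2) * (e m + e n)"
      unfolding d_def using y e(3) less_imp_le[OF e(2)]
      by (intro dist_sq_le_if_near_infdist[OF assms(2)]) (auto simp: d_def)
    then have "dist (y m) (y n) \<le> sqrt ((4 * d + 2) * e m + (4 * d + 2) * e n)"
      by (intro real_le_rsqrt) (simp add: distrib_left)
    also have "\<dots> \<le> f m + f n"
      unfolding f_def using \<open>0 \<le> d\<close> e(2)
      by (intro sqrt_add_le_add_sqrt mult_nonneg_nonneg) (auto intro: less_imp_le)
    finally show ?thesis .
  qed
  moreover have "f \<longlonglongrightarrow> 0"
    unfolding f_def using tendsto_real_sqrt[OF tendsto_mult_right_zero[OF e(1)]] by simp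
  ultimately obtain m where m: "y \<longlonglongrightarrow> m"
    using Cauchy_if_dist_le_add Cauchy_convergent_iff convergent_def by metis
  have "dist w m \<le> d"
  proof (rule LIMSEQ_le[of "\<lambda>n. dist w (y n)" _ "\<lambda>n. d + e n"])
    show "(\<lambda>n. dist w (y n)) \<longlonglongrightarrow> dist w m"
      by (intro tendsto_intros m)
    show "(\<lambda>n. d + e n) \<longlonglongrightarrow> d"
      using tendsto_add[OF tendsto_const e(1), of d] by simp
  qed (use y(2) in auto)
  show ?thesis
  proof (rule that)
    show "m \<in> C"
      using closed_sequentially[OF assms(1) _ m] y(1) by auto
    show "dist w m \<le> dist w z" if "z \<in> C" for z
      using \<open>dist w m \<le> d\<close> infdist_le[OF that, of w] unfolding d_def by linarith
  qed
qed

lemma orthogonal_if_norm_le_norm_add_scaleR: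
  fixes e g :: "'a::real_inner"
  assumes "\<And>s::real. norm e \<le> norm (e + s *\<^sub>R g)"
  shows "inner e g = 0"
proof -
  define k where "k = inner e g"
  define G where "G = inner g g"
  have G0: "G \<ge> 0"
    unfolding G_def by simp
  define s where "s = - k / (G + 1)"
  have "(norm e)\<^sup>2 \<le> (norm (e + s *\<^sub>R g))\<^sup>2"
    using assms[of s] by (simp add: power_mono)
  also have "\<dots> = (norm e)\<^sup>2 + 2 * s * k + s\<^sup>2 * G"
    unfolding power2_norm_eq_inner k_def G_def
    by (simp add: inner_add_left inner_add_right inner_commute power2_eq_square algebra_simps)
  finally have "0 \<le> (2 * s * k + s\<^sup>2 * G) * (G + 1)\<^sup>2"
    by simp
  also have "\<dots> = 2 * k * (s * (G + 1)) * (G + 1) + (s * (G + 1))\<^sup>2 * G"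
    by (simp add: power2_eq_square algebra_simps)
  also have "s * (G + 1) = - k"
    unfolding s_def using G0 by (simp add: field_simps)
  also have "2 * k * (- k) * (G + 1) + (- k)\<^sup>2 * G = - k\<^sup>2 * (G + 2)"
    by (simp add: power2_eq_square algebra_simps)
  finally have "k\<^sup>2 \<le> 0"
    using G0 by (simp add: mult_le_0_iff)
  then show ?thesis
    unfolding k_def by simp
qed

lemma dense_orthogonal_imp_eq_0:
  fixes e :: "'a::real_inner"
  assumes "closure D = UNIV" "\<forall>y\<in>D. inner y e = 0"
  shows "e = 0"
proof -
  obtain f where f: "\<And>n. f n \<in> D" "f \<longlonglongrightarrow> e"
    using assms(1) by (metis UNIV_I closure_sequential)
  have "(\<lambda>n. inner (f n) e) \<longlonglongrightarrow> inner e e"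
    by (intro tendsto_intros f)
  moreover have "(\<lambda>n. inner (f n) e) = (\<lambda>n. 0)"
    using f assms by auto
  ultimately have "inner e e = 0"
    using LIMSEQ_unique tendsto_const by metis
  then show ?thesis by simp
qed

section \<open>Self-adjoint operators\<close>

lemma linear_op_on_subspace: "linear_op_on D T \<Longrightarrow> subspace D"
  by (simp add: linear_op_on_def)

lemma linear_op_on_add: "linear_op_on D T \<Longrightarrow> x \<in> D \<Longrightarrow> y \<in> D \<Longrightarrow> T (x + y) = T x + T y"
  by (simp add: linear_op_on_def)

lemma linear_op_on_scaleR: "linear_op_on D T \<Longrightarrow> x \<in> D \<Longrightarrow> T (r *\<^sub>R x) = r *\<^sub>R T x"
  by (simp add: linear_op_on_def)

lemma linear_op_on_diff:
  assumes "linear_op_on D T" "x \<in> D" "y \<in> D"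
  shows "T (x - y) = T x - T y"
proof -
  have "- y \<in> D"
    using assms by (simp add: subspace_neg linear_op_on_subspace)
  moreover have "T (- y) = - T y"
    using linear_op_on_scaleR[OF assms(1,3), of "-1"] by simp
  ultimately show ?thesis
    using linear_op_on_add[OF assms(1,2)] by (metis diff_conv_add_uminus)
qed

lemma self_adjoint_op_closed_graph:
  fixes T :: "'a::real_inner \<Rightarrow> 'a"
  assumes sa: "self_adjoint_op D T" and x: "\<And>n. x n \<in> D" "x \<longlonglongrightarrow> x0"
    and Tx: "(\<lambda>n. T (x n)) \<longlonglongrightarrow> z"
  shows "x0 \<in> D" "T x0 = z"
proof -
  have sym: "\<forall>a\<in>D. \<forall>b\<in>D. inner (T a) b = inner a (T b)"
    using sa by (auto simp: self_adjoint_op_def)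
  have eq: "inner (T y) x0 = inner y z" if "y \<in> D" for y
  proof -
    have "(\<lambda>n. inner (T y) (x n)) \<longlonglongrightarrow> inner (T y) x0"
      by (intro tendsto_intros x)
    moreover have "(\<lambda>n. inner (T y) (x n)) \<longlonglongrightarrow> inner y z"
      using sym that x(1) tendsto_inner[OF tendsto_const Tx, of y] by simp
    ultimately show ?thesis
      using LIMSEQ_unique by blast
  qed
  then have "x0 \<in> adjoint_domain D T"
    unfolding adjoint_domain_def by blast
  then show x0D: "x0 \<in> D"
    using sa by (simp add: self_adjoint_op_def)
  have "\<forall>y\<in>D. inner y (T x0 - z) = 0"
    using eq sym x0D by (simp add: inner_diff_right)
  then show "T x0 = z"
    using dense_orthogonal_imp_eq_0 sa by (fastforce simp: self_adjoint_op_def)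
qed

lemma resolvent_norm_ge:
  fixes T :: "'a::real_inner \<Rightarrow> 'a"
  assumes "0 \<le> inner (T x) x" "\<mu> > 0"
  shows "\<mu> * norm x \<le> norm (T x + \<mu> *\<^sub>R x)"
proof -
  have "(norm (T x + \<mu> *\<^sub>R x))\<^sup>2 = (norm (T x))\<^sup>2 + 2 * \<mu> * inner (T x) x + \<mu>\<^sup>2 * (norm x)\<^sup>2"
    unfolding power2_norm_eq_inner
    by (simp add: inner_add_left inner_add_right inner_commute power2_eq_square algebra_simps)
  also have "\<dots> \<ge> (\<mu> * norm x)\<^sup>2"
    using assms by (simp add: power_mult_distrib)
  finally show ?thesis
    by (rule power2_le_imp_le) simp
qed

text \<open>The range of \<open>T + \<mu>\<close> is a closed subspace; the residual of the nearest point in it is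
  orthogonal to the range, hence lies in \<open>D(T*) = D\<close>, and nonnegativity of \<open>T\<close> forces it to
  vanish.\<close>

context
  fixes D :: "'a::{real_inner,complete_space} set" and T :: "'a \<Rightarrow> 'a" and \<mu> :: real
  assumes sa: "self_adjoint_op D T" and nonneg: "\<forall>x\<in>D. 0 \<le> inner (T x) x" and \<mu>: "\<mu> > 0"
begin

private abbreviation (input) "R x \<equiv> T x + \<mu> *\<^sub>R x"

private lemma T_linear: "linear_op_on D T"
  using sa by (simp add: self_adjoint_op_def)

private lemma D_subspace: "subspace D"
  using T_linear by (rule linear_op_on_subspace)

private lemma R_add_scaleR:
  assumes "x \<in> D" "y \<in> D"
  shows "R (x + r *\<^sub>R y) = R x + r *\<^sub>R R y"
proof -
  have "T (x + r *\<^sub>R y) = T x + r *\<^sub>R T y"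
    using linear_op_on_add[OF T_linear assms(1) subspace_scale[OF D_subspace assms(2)]]
      linear_op_on_scaleR[OF T_linear assms(2)] by simp
  then show ?thesis
    by (simp add: scaleR_add_right)
qed

private lemma subspace_range: "subspace (R ` D)"
  unfolding subspace_def
proof (intro conjI ballI allI)
  have "T 0 = 0"
    using linear_op_on_scaleR[OF T_linear subspace_0[OF D_subspace], of 0] by simp
  then show "0 \<in> R ` D"
    by (intro image_eqI[of _ _ 0] subspace_0[OF D_subspace]) simp
next
  fix a b
  assume "a \<in> R ` D" "b \<in> R ` D"
  then obtain x y where xy: "x \<in> D" "y \<in> D" and "a = R x" "b = R y"
    by (elim imageE)
  then have "a + b = R (x + 1 *\<^sub>R y)"
    by (simp only: R_add_scaleR) simp
  then show "a + b \<in> R ` D"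
    by (rule image_eqI) (intro subspace_add[OF D_subspace] subspace_scale[OF D_subspace] xy)
next
  fix r a
  assume "a \<in> R ` D"
  then obtain x where x: "x \<in> D" "a = R x"
    by (rule imageE)
  then have "r *\<^sub>R a = R (r *\<^sub>R x)"
    using linear_op_on_scaleR[OF T_linear x(1), of r] by (simp add: scaleR_add_right)
  then show "r *\<^sub>R a \<in> R ` D"
    by (rule image_eqI) (rule subspace_scale[OF D_subspace x(1)])
qed

private lemma closed_range: "closed (R ` D)"
proof (rule closed_sequential_limits[THEN iffD2], intro allI impI, elim conjE)
  fix z and y :: "nat \<Rightarrow> 'a"
  assume "\<forall>n. y n \<in> R ` D" and yz: "y \<longlonglongrightarrow> z"
  then have "\<forall>n. \<exists>x. x \<in> D \<and> y n = R x"
    by blast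
  then obtain x where x: "\<And>n. x n \<in> D" "\<And>n. y n = R (x n)"
    unfolding choice_iff by blast
  have x_dist: "\<mu> * dist (x m) (x n) \<le> dist (y m) (y n)" for m n
  proof -
    have "x m - x n \<in> D"
      by (intro subspace_diff[OF D_subspace] x(1))
    moreover have "R (x m - x n) = y m - y n"
      using linear_op_on_diff[OF T_linear x(1) x(1)] x(2) by (simp add: algebra_simps)
    ultimately show ?thesis
      using resolvent_norm_ge[of T "x m - x n" \<mu>] nonneg \<mu> by (simp add: dist_norm)
  qed
  have "Cauchy x"
  proof (rule metric_CauchyI)
    fix \<epsilon> :: real
    assume "\<epsilon> > 0"
    then obtain N where N: "\<forall>m\<ge>N. \<forall>n\<ge>N. dist (y m) (y n) < \<mu> * \<epsilon>"
      using metric_CauchyD[OF LIMSEQ_imp_Cauchy[OF yz] mult_pos_pos[OF \<mu>]] by blast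
    have "dist (x m) (x n) < \<epsilon>" if "m \<ge> N" "n \<ge> N" for m n
    proof -
      have "\<mu> * dist (x m) (x n) < \<mu> * \<epsilon>"
        using x_dist[of m n] N that by (meson order_le_less_trans)
      then show ?thesis
        using \<mu> by simp
    qed
    then show "\<exists>N. \<forall>m\<ge>N. \<forall>n\<ge>N. dist (x m) (x n) < \<epsilon>"
      by blast
  qed
  then obtain x0 where x0: "x \<longlonglongrightarrow> x0"
    using Cauchy_convergent_iff convergent_def by blast
  have "(\<lambda>n. y n - \<mu> *\<^sub>R x n) \<longlonglongrightarrow> z - \<mu> *\<^sub>R x0"
    by (intro tendsto_intros yz x0)
  then have "(\<lambda>n. T (x n)) \<longlonglongrightarrow> z - \<mu> *\<^sub>R x0"
    using x(2) by simp
  from self_adjoint_op_closed_graph[OF sa x(1) x0 this]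
  have "x0 \<in> D" "z = R x0"
    by simp_all
  then show "z \<in> R ` D"
    by (simp add: image_eqI)
qed

lemma self_adjoint_op_resolvent_surj: "\<exists>x\<in>D. T x + \<mu> *\<^sub>R x = w"
proof -
  have "R ` D \<noteq> {}"
    using subspace_0[OF subspace_range] by auto
  then obtain m where m: "m \<in> R ` D" and m_near: "\<And>z. z \<in> R ` D \<Longrightarrow> dist w m \<le> dist w z"
    by (rule closed_convex_nearest_point[OF closed_range subspace_imp_convex[OF subspace_range], where w = w])
      blast
  from m obtain x0 where x0: "x0 \<in> D" and "m = R x0"
    by (rule imageE)
  then have near: "dist w (R x0) \<le> dist w (R y)" if "y \<in> D" for y
    using m_near[OF imageI[OF that]] by simp
  define e where "e = w - R x0"
  have orth: "inner e (R y) = 0" if "y \<in> D" for y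
  proof (rule orthogonal_if_norm_le_norm_add_scaleR)
    fix s :: real
    have "w - R (x0 + (- s) *\<^sub>R y) = e + s *\<^sub>R R y"
      unfolding e_def R_add_scaleR[OF x0 that] by (simp add: algebra_simps)
    moreover have "x0 + (- s) *\<^sub>R y \<in> D"
      using subspace_add[OF D_subspace x0 subspace_scale[OF D_subspace that]] .
    then have "norm e \<le> norm (w - R (x0 + (- s) *\<^sub>R y))"
      using near unfolding e_def dist_norm by blast
    ultimately show "norm e \<le> norm (e + s *\<^sub>R R y)"
      by simp
  qed
  have "inner (T y) e = inner y (- \<mu> *\<^sub>R e)" if "y \<in> D" for y
    using orth[OF that] by (simp add: inner_add_right inner_commute)
  then have "e \<in> adjoint_domain D T"
    unfolding adjoint_domain_def by blast
  then have "e \<in> D"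
    using sa by (simp add: self_adjoint_op_def)
  then have "inner (T e) e + \<mu> * inner e e = 0" and "0 \<le> inner (T e) e"
    using orth[of e] nonneg by (simp_all add: inner_add_right inner_commute)
  then have "\<mu> * inner e e \<le> 0"
    by linarith
  then have "inner e e \<le> 0"
    using \<mu> by (simp add: mult_le_0_iff)
  then have "e = 0"
    by (metis inner_ge_zero inner_eq_zero_iff order_antisym)
  then show ?thesis
    using x0 unfolding e_def by auto
qed

end

text \<open>The approximant is \<open>x = \<mu> y\<close> with \<open>S y + \<mu> y = v\<close>: then \<open>y \<in> D(B)\<close>, where coercivity
  applies, and \<open>v - x = S y\<close>.\<close>

lemma sqrt_op_coercive_approx:
  fixes S B :: "'a::{real_inner,complete_space} \<Rightarrow> 'a"
  assumes S_sqrt: "is_sqrt_op DS S DB B"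
    and coercive: "\<forall>v\<in>DB. inner (B v) v \<ge> b * (norm v)\<^sup>2"
    and v: "v \<in> DS" and \<mu>: "\<mu> > 0"
  obtains x where "b * (norm x)\<^sup>2 \<le> (norm (S v))\<^sup>2" "norm (v - x) \<le> norm (S v) / \<mu>"
proof -
  have sa: "self_adjoint_op DS S" and nonneg: "\<forall>x\<in>DS. 0 \<le> inner (S x) x"
    and DB: "DB = {x\<in>DS. S x \<in> DS}" and BSS: "\<forall>x\<in>DB. B x = S (S x)"
    using S_sqrt by (auto simp: is_sqrt_op_def)
  have S_linear: "linear_op_on DS S"
    using sa by (simp add: self_adjoint_op_def)
  note DS_subspace = linear_op_on_subspace[OF S_linear]
  obtain y where y: "y \<in> DS" "S y + \<mu> *\<^sub>R y = v"
    using self_adjoint_op_resolvent_surj[OF sa nonneg \<mu>] by blast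
  have Sy: "S y = v - \<mu> *\<^sub>R y"
    using y by (simp add: algebra_simps)
  have SyD: "S y \<in> DS"
    unfolding Sy using v y DS_subspace by (simp add: subspace_diff subspace_scale)
  have "S (S y) = S (v - \<mu> *\<^sub>R y)"
    by (simp add: Sy)
  also have "\<dots> = S v - \<mu> *\<^sub>R S y"
    using linear_op_on_diff[OF S_linear v subspace_scale[OF DS_subspace y(1)]] linear_op_on_scaleR[OF S_linear y(1)]
    by simp
  finally have "S (S y) + \<mu> *\<^sub>R S y = S v"
    by simp
  then have Sy_le: "\<mu> * norm (S y) \<le> norm (S v)"
    using resolvent_norm_ge[of S "S y" \<mu>] nonneg SyD \<mu> by simp
  have "b * (norm y)\<^sup>2 \<le> inner (B y) y"
    using coercive DB y SyD by simp
  also have "\<dots> = (norm (S y))\<^sup>2"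
    using BSS DB y SyD sa by (simp add: self_adjoint_op_def power2_norm_eq_inner)
  finally have "\<mu>\<^sup>2 * (b * (norm y)\<^sup>2) \<le> (\<mu> * norm (S y))\<^sup>2"
    by (simp add: mult_left_mono power_mult_distrib)
  also have "\<dots> \<le> (norm (S v))\<^sup>2"
    using Sy_le \<mu> by (simp add: power_mono)
  finally have "b * (norm (\<mu> *\<^sub>R y))\<^sup>2 \<le> (norm (S v))\<^sup>2"
    by (simp add: power_mult_distrib algebra_simps)
  moreover have "norm (v - \<mu> *\<^sub>R y) \<le> norm (S v) / \<mu>"
    using Sy_le \<mu> unfolding Sy[symmetric] by (simp add: field_simps)
  ultimately show ?thesis
    by (rule that)
qed

lemma sqrt_op_coercive:
  fixes S B :: "'a::{real_inner,complete_space} \<Rightarrow> 'a"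
  assumes S_sqrt: "is_sqrt_op DS S DB B"
    and coercive: "\<forall>v\<in>DB. inner (B v) v \<ge> b * (norm v)\<^sup>2"
    and v: "v \<in> DS"
  shows "b * (norm v)\<^sup>2 \<le> (norm (S v))\<^sup>2"
proof -
  have "\<exists>x. b * (norm x)\<^sup>2 \<le> (norm (S v))\<^sup>2 \<and> norm (v - x) \<le> norm (S v) / (real n + 1)" for n
    by (rule sqrt_op_coercive_approx[OF S_sqrt coercive v, of "real n + 1"]) auto
  then obtain x where x: "\<And>n. b * (norm (x n))\<^sup>2 \<le> (norm (S v))\<^sup>2"
    "\<And>n. norm (v - x n) \<le> norm (S v) / (real n + 1)"
    by metis
  have "(\<lambda>n. norm (S v) / (real n + 1)) \<longlonglongrightarrow> 0"
    using tendsto_mult_right_zero[OF LIMSEQ_one_over_real_add_1, of "norm (S v)"] by simp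
  then have "(\<lambda>n. norm (x n - v)) \<longlonglongrightarrow> 0"
    by (rule Lim_null_comparison[rotated]) (auto simp: norm_minus_commute x(2))
  then have "x \<longlonglongrightarrow> v"
    by (simp add: tendsto_norm_zero_iff LIM_zero_cancel)
  then have "(\<lambda>n. b * (norm (x n))\<^sup>2) \<longlonglongrightarrow> b * (norm v)\<^sup>2"
    by (intro tendsto_intros)
  then show ?thesis
    by (rule LIMSEQ_le_const2) (use x(1) in auto)
qed

section \<open>The damped energy functional\<close>

text \<open>\<open>damped_energy c p y x\<close> is \<open>E\<close> evaluated at the velocity \<open>p = u'\<close>,
  \<open>y = S u = B^(1/2) u\<close> and the position \<open>x = u\<close>.\<close>

definition damped_energy :: "real \<Rightarrow> 'a::real_inner \<Rightarrow> 'a \<Rightarrow> 'a \<Rightarrow> real" where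
  "damped_energy c p y x = (norm p)\<^sup>2 + (norm y)\<^sup>2 + c * inner p x + c\<^sup>2 / 2 * (norm x)\<^sup>2"

definition damped_energy_rate :: "real \<Rightarrow> real \<Rightarrow> 'a::real_inner \<Rightarrow> 'a \<Rightarrow> 'a \<Rightarrow> real" where
  "damped_energy_rate c K p y x =
     - c * (norm p)\<^sup>2 - c * (norm y)\<^sup>2 + K * norm x * norm (2 *\<^sub>R p + c *\<^sub>R x)"

definition decay_rate :: "real \<Rightarrow> real \<Rightarrow> real \<Rightarrow> real" where
  "decay_rate b c K = c - (c\<^sup>2 + 2 * K) / (2 * sqrt (b + c\<^sup>2 / 4))"

lemma damped_energy_completed_square:
  "damped_energy c p y x = (norm (p + (c / 2) *\<^sub>R x))\<^sup>2 + (norm y)\<^sup>2 + c\<^sup>2 / 4 * (norm x)\<^sup>2"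
  unfolding damped_energy_def power2_norm_eq_inner
  by (simp add: inner_add_left inner_add_right inner_commute power2_eq_square algebra_simps)

lemma damped_energy_nonneg: "0 \<le> damped_energy c p y x"
  unfolding damped_energy_completed_square by simp

lemma norm_sq_le_damped_energy: "(norm y)\<^sup>2 + (norm p)\<^sup>2 \<le> 3 * damped_energy c p y x"
proof -
  define w where "w = p + (c / 2) *\<^sub>R x"
  have "norm p \<le> norm w + norm ((c / 2) *\<^sub>R x)"
    using norm_triangle_ineq4[of w "(c / 2) *\<^sub>R x"] unfolding w_def by simp
  then have "(norm p)\<^sup>2 \<le> (norm w + norm ((c / 2) *\<^sub>R x))\<^sup>2"
    by (simp add: power_mono)
  also have "\<dots> \<le> 2 * (norm w)\<^sup>2 + 2 * (norm ((c / 2) *\<^sub>R x))\<^sup>2"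
    using sum_squares_bound[of "norm w" "norm ((c / 2) *\<^sub>R x)"]
    by (simp add: power2_eq_square algebra_simps)
  also have "\<dots> = 2 * (norm w)\<^sup>2 + 2 * (c\<^sup>2 / 4 * (norm x)\<^sup>2)"
    by (simp add: power_mult_distrib power_divide)
  finally have "(norm p)\<^sup>2 \<le> 2 * (norm w)\<^sup>2 + 2 * (c\<^sup>2 / 4 * (norm x)\<^sup>2)" .
  moreover have "0 \<le> c\<^sup>2 / 4 * (norm x)\<^sup>2" "0 \<le> (norm w)\<^sup>2" "0 \<le> (norm y)\<^sup>2"
    by simp_all
  ultimately show ?thesis
    unfolding damped_energy_completed_square w_def[symmetric] by (smt (verit))
qed

lemma damped_energy_le:
  assumes "0 < b" "0 \<le> c" "b * (norm x)\<^sup>2 \<le> (norm y)\<^sup>2"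
  shows "damped_energy c p y x \<le> (2 + 3 * c\<^sup>2 / (4 * b)) * ((norm y)\<^sup>2 + (norm p)\<^sup>2)"
proof -
  have "c * inner p x \<le> c * (norm p * norm (x))"
    using assms(2) by (intro mult_left_mono) (auto intro: order_trans[OF abs_ge_self Cauchy_Schwarz_ineq2])
  also have "\<dots> \<le> (norm p)\<^sup>2 + c\<^sup>2 / 4 * (norm x)\<^sup>2"
    using sum_squares_bound[of "norm p" "c / 2 * norm x"] by (simp add: power2_eq_square algebra_simps)
  finally have "damped_energy c p y x \<le> 2 * (norm p)\<^sup>2 + (norm y)\<^sup>2 + 3 * c\<^sup>2 / 4 * (norm x)\<^sup>2"
    unfolding damped_energy_def by simp
  also have "3 * c\<^sup>2 / 4 * (norm x)\<^sup>2 \<le> 3 * c\<^sup>2 / (4 * b) * (norm y)\<^sup>2"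
    using assms mult_left_mono[OF assms(3), of "3 * c\<^sup>2 / (4 * b)"] by (simp add: field_simps)
  finally have "damped_energy c p y x \<le> 2 * (norm p)\<^sup>2 + (norm y)\<^sup>2 + 3 * c\<^sup>2 / (4 * b) * (norm y)\<^sup>2"
    by simp
  moreover have "0 \<le> 3 * c\<^sup>2 / (4 * b) * (norm p)\<^sup>2"
    using assms(1) by simp
  ultimately show ?thesis
    by (simp add: algebra_simps add_divide_distrib) (smt (verit) zero_le_power2)
qed

text \<open>The cross terms are absorbed by the AM-GM inequality with weight \<open>sqrt (b + c^2/4)\<close>; this is
  where the decay rate comes from.\<close>

lemma damped_energy_rate_le:
  assumes "0 < b" "0 \<le> K" "b * (norm x)\<^sup>2 \<le> (norm y)\<^sup>2"
  shows "damped_energy_rate c K p y x \<le> - decay_rate b c K * damped_energy c p y x"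
proof -
  define w where "w = p + (c / 2) *\<^sub>R x"
  define r where "r = sqrt (b + c\<^sup>2 / 4)"
  have r: "0 < r" "r\<^sup>2 = b + c\<^sup>2 / 4"
    unfolding r_def using assms(1) by (simp_all add: add_pos_nonneg)
  have E: "damped_energy c p y x = (norm w)\<^sup>2 + (norm y)\<^sup>2 + c\<^sup>2 / 4 * (norm x)\<^sup>2"
    unfolding w_def by (rule damped_energy_completed_square)
  have "2 * r * (norm w * norm x) \<le> (norm w)\<^sup>2 + r\<^sup>2 * (norm x)\<^sup>2"
    using sum_squares_bound[of "norm w" "r * norm x"] by (simp add: power2_eq_square algebra_simps)
  also have "\<dots> \<le> damped_energy c p y x"
    unfolding E r(2) using assms(3) by (simp add: algebra_simps)
  finally have wx: "2 * r * (norm w * norm x) \<le> damped_energy c p y x" .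
  have "2 *\<^sub>R p + c *\<^sub>R x = 2 *\<^sub>R w"
    unfolding w_def by (simp add: algebra_simps)
  then have "norm (2 *\<^sub>R p + c *\<^sub>R x) = 2 * norm w"
    by simp
  then have "damped_energy_rate c K p y x = - c * damped_energy c p y x + c\<^sup>2 * inner w x
      + 2 * K * (norm w * norm x)"
    unfolding damped_energy_rate_def E by (simp add: w_def power2_norm_eq_inner)
      (simp add: inner_add_left inner_add_right inner_commute power2_eq_square algebra_simps)
  also have "\<dots> \<le> - c * damped_energy c p y x + (c\<^sup>2 + 2 * K) * (norm w * norm x)"
    using mult_left_mono[OF order_trans[OF abs_ge_self Cauchy_Schwarz_ineq2[of w x]], of "c\<^sup>2"]
    by (simp add: algebra_simps)
  also have "(c\<^sup>2 + 2 * K) * (norm w * norm x)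
      = (c\<^sup>2 + 2 * K) / (2 * r) * (2 * r * (norm w * norm x))"
    using r(1) by simp
  also have "\<dots> \<le> (c\<^sup>2 + 2 * K) / (2 * r) * damped_energy c p y x"
    using assms(2) r(1) by (intro mult_left_mono wx) auto
  finally show ?thesis
    unfolding decay_rate_def r_def[symmetric] by (simp add: algebra_simps)
qed

lemma decay_rate_pos:
  assumes "0 < b" "0 < c" "K < c * sqrt (b + c\<^sup>2 / 4) - c\<^sup>2 / 2"
  shows "0 < decay_rate b c K"
proof -
  have "0 < sqrt (b + c\<^sup>2 / 4)"
    using assms by (simp add: add_pos_nonneg)
  then show ?thesis
    using assms(3) unfolding decay_rate_def by (simp add: field_simps)
qed

lemma damped_energy_has_real_derivative:
  assumes "(p has_vector_derivative p') (at t)" "(y has_vector_derivative y') (at t)"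
    and "(x has_vector_derivative x') (at t)"
  shows "((\<lambda>s. damped_energy c (p s) (y s) (x s)) has_real_derivative
      2 * inner p' (p t) + 2 * inner y' (y t) + c * (inner p' (x t) + inner (p t) x')
      + c\<^sup>2 * inner x' (x t)) (at t)"
proof -
  have "((\<lambda>s. inner (p s) (p s) + inner (y s) (y s) + c * inner (p s) (x s)
      + c\<^sup>2 / 2 * inner (x s) (x s)) has_real_derivative
      (inner p' (p t) + inner (p t) p') + (inner y' (y t) + inner (y t) y')
      + c * (inner p' (x t) + inner (p t) x') + c\<^sup>2 / 2 * (inner x' (x t) + inner (x t) x')) (at t)"
    by (intro DERIV_add DERIV_cmult has_real_derivative_inner assms)
  then show ?thesis
    unfolding damped_energy_def power2_norm_eq_inner by (simp add: inner_commute)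
qed

lemma abs_inner_diff_le:
  fixes x y z :: "'a::real_inner"
  assumes "norm x \<le> M" "norm y \<le> M" "norm z \<le> M"
  shows "\<bar>inner x (y - z)\<bar> \<le> M * (2 * M)"
proof -
  have "\<bar>inner x (y - z)\<bar> \<le> norm x * norm (y - z)"
    by (rule Cauchy_Schwarz_ineq2)
  also have "\<dots> \<le> M * (2 * M)"
    using assms norm_triangle_ineq4[of y z] norm_ge_zero[of x] norm_ge_zero[of "y - z"]
    by (intro mult_mono) linarith+
  finally show ?thesis .
qed

lemma abs_approx_rate_le:
  fixes z y x p q :: "'a::real_inner"
  assumes norms: "norm z \<le> M" "norm y \<le> M" "norm x \<le> M" "norm p \<le> M" "norm q \<le> M"
    and c: "0 \<le> c" and K: "0 \<le> K" and l: "0 \<le> l" "l \<le> M"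
  shows "\<bar>- c * (norm z)\<^sup>2 - c * (norm y)\<^sup>2 + c * inner y (y - q) + c * inner z (p - z)
      + c\<^sup>2 * inner x (p - z) + K * (norm x + l) * norm (2 *\<^sub>R z + c *\<^sub>R x)\<bar>
    \<le> (6 * c + 2 * c\<^sup>2 + 2 * K * (2 + c)) * M\<^sup>2"
proof -
  have sq: "(norm a)\<^sup>2 \<le> M\<^sup>2" if "norm a \<le> M" for a :: 'a
    using that by (intro power_mono) auto
  have ip: "\<bar>k * inner a (b - d)\<bar> \<le> 2 * (k * M\<^sup>2)"
    if "0 \<le> k" "norm a \<le> M" "norm b \<le> M" "norm d \<le> M" for k and a b d :: 'a
  proof -
    have "\<bar>k * inner a (b - d)\<bar> = k * \<bar>inner a (b - d)\<bar>"
      using that(1) by (simp add: abs_mult)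
    also have "\<dots> \<le> k * (M * (2 * M))"
      using abs_inner_diff_le[OF that(2-4)] that(1) by (rule mult_left_mono)
    finally show ?thesis
      by (simp add: power2_eq_square)
  qed
  have "0 \<le> c * (norm z)\<^sup>2" "c * (norm z)\<^sup>2 \<le> c * M\<^sup>2"
    "0 \<le> c * (norm y)\<^sup>2" "c * (norm y)\<^sup>2 \<le> c * M\<^sup>2"
    using sq norms c by (auto intro: mult_left_mono)
  moreover have "\<bar>c * inner y (y - q)\<bar> \<le> 2 * (c * M\<^sup>2)"
    "\<bar>c * inner z (p - z)\<bar> \<le> 2 * (c * M\<^sup>2)"
    "\<bar>c\<^sup>2 * inner x (p - z)\<bar> \<le> 2 * (c\<^sup>2 * M\<^sup>2)"
    using norms c by (auto intro: ip)
  moreover have "norm (2 *\<^sub>R z + c *\<^sub>R x) \<le> (2 + c) * M"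
    using norm_triangle_ineq[of "2 *\<^sub>R z" "c *\<^sub>R x"] norms(1,3) c
      mult_left_mono[OF norms(3) c] by (simp add: algebra_simps)
  then have "K * (norm x + l) * norm (2 *\<^sub>R z + c *\<^sub>R x) \<le> K * (2 * M) * ((2 + c) * M)"
    using norms K l by (intro mult_mono mult_left_mono) auto
  moreover have "0 \<le> K * (norm x + l) * norm (2 *\<^sub>R z + c *\<^sub>R x)"
    using K l by simp
  moreover have "K * (2 * M) * ((2 + c) * M) = 4 * (K * M\<^sup>2) + 2 * (c * (K * M\<^sup>2))"
    "(6 * c + 2 * c\<^sup>2 + 2 * K * (2 + c)) * M\<^sup>2
      = 6 * (c * M\<^sup>2) + 2 * (c\<^sup>2 * M\<^sup>2) + 4 * (K * M\<^sup>2) + 2 * (c * (K * M\<^sup>2))"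
    by (simp_all add: power2_eq_square algebra_simps)
  ultimately show ?thesis
    unfolding abs_le_iff mult_minus_left by linarith
qed

section \<open>Mild solutions of the damped wave equation\<close>

locale damped_wave_solution =
  fixes DS :: "'a::{real_inner,complete_space} set" and S :: "'a \<Rightarrow> 'a"
    and A :: "real \<Rightarrow> 'a \<Rightarrow>\<^sub>L 'a" and c K :: real and u0 u1 :: 'a and u u' :: "real \<Rightarrow> 'a"
  assumes S_linear: "linear_op_on DS S"
    and mild: "mild_solution DS S A c u0 u1 u u'"
    and A_bound: "AE t in lborel. 0 \<le> t \<longrightarrow> norm (A t) \<le> K"
    and c_pos: "0 < c"
begin

lemma u_in: "0 \<le> t \<Longrightarrow> u t \<in> DS"
  and continuous_Su: "continuous_on {0..} (\<lambda>t. S (u t))"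
  and continuous_u: "continuous_on {0..} u"
  and u_has_derivative: "0 \<le> t \<Longrightarrow> (u has_vector_derivative u' t) (at t within {0..})"
  and continuous_u': "continuous_on {0..} u'"
  and weak_equation: "v \<in> DS \<Longrightarrow> 0 \<le> t \<Longrightarrow>
    (\<lambda>s. inner (S (u s)) (S v) + inner (A s (u s)) v + c * inner (u' s) v) integrable_on {0..t} \<and>
    inner (u' t) v = inner u1 v -
      integral {0..t} (\<lambda>s. inner (S (u s)) (S v) + inner (A s (u s)) v + c * inner (u' s) v)"
  using mild by (auto simp: mild_solution_def)

lemma K_nonneg: "0 \<le> K"
  using A_bound by (rule AE_norm_le_imp_nonneg)

lemma DS_subspace: "subspace DS"
  using S_linear by (rule linear_op_on_subspace)

lemma u_has_derivative_at:
  assumes "0 < t"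
  shows "(u has_vector_derivative u' t) (at t)"
proof -
  have "(u has_vector_derivative u' t) (at t within {0<..})"
    using assms by (intro has_vector_derivative_within_subset[OF u_has_derivative]) auto
  moreover have "at t within {0<..} = at t"
    using assms by (intro at_within_open) auto
  ultimately show ?thesis
    by simp
qed

lemma norm_u_diff_le:
  assumes "0 \<le> t" "t \<le> \<tau>" and L: "\<And>x. x \<in> {t..\<tau>} \<Longrightarrow> norm (u' x) \<le> L"
  shows "norm (u \<tau> - u t) \<le> L * (\<tau> - t)"
proof (cases "t = \<tau>")
  case False
  then have "t < \<tau>"
    using assms by simp
  have "norm (u \<tau> - u t) \<le> L * \<tau> - L * t"
  proof (rule differentiable_bound_general[OF \<open>t < \<tau>\<close>, of u "\<lambda>x. L * x" u' "\<lambda>_. L"])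
    show "continuous_on {t..\<tau>} u"
      using continuous_u assms(1) by (rule continuous_on_subset_nonneg)
    show "continuous_on {t..\<tau>} ((*) L)"
      by (intro continuous_intros)
    fix x
    assume "t < x" "x < \<tau>"
    then show "(u has_vector_derivative u' x) (at x)" "norm (u' x) \<le> L"
      using assms u_has_derivative_at L by auto
    show "((*) L has_vector_derivative L) (at x)"
      by (auto intro!: derivative_eq_intros simp flip: has_real_derivative_iff_has_vector_derivative)
  qed
  then show ?thesis
    by (simp add: algebra_simps)
qed simp

lemma A_integral_bound:
  assumes "0 \<le> t" "0 < h" and int: "(\<lambda>s. inner (A s (u s)) v) integrable_on {t..t+h}"
    and R: "\<And>\<tau>. \<tau> \<in> {t..t+h} \<Longrightarrow> norm (u \<tau>) \<le> R"
  shows "\<bar>integral {t..t+h} (\<lambda>s. inner (A s (u s)) v)\<bar> \<le> K * h * R * norm v"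
proof -
  obtain N where N: "{s \<in> space lborel. \<not> (0 \<le> s \<longrightarrow> norm (A s) \<le> K)} \<subseteq> N"
      "emeasure lborel N = 0" "N \<in> sets lborel"
    using AE_E[OF A_bound] by blast
  then have "N \<in> null_sets lborel"
    by auto
  then have "negligible N"
    by (simp add: negligible_iff_null_sets null_sets_completionI)
  define g where "g s = (if s \<in> N then 0 else inner (A s (u s)) v)" for s
  have R0: "0 \<le> R"
    using R[of t] assms(2) by (meson atLeastAtMost_iff less_add_same_cancel1 less_imp_le
        norm_ge_zero order_refl order_trans)
  have g_le: "\<bar>g s\<bar> \<le> K * R * norm v" if "s \<in> {t..t+h}" for s
  proof (cases "s \<in> N")
    case False
    moreover have "0 \<le> s"
      using that assms(1) by simp
    ultimately have "norm (A s) \<le> K"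
      using N(1) by auto
    have "\<bar>inner (A s (u s)) v\<bar> \<le> norm (A s (u s)) * norm v"
      by (rule Cauchy_Schwarz_ineq2)
    also have "\<dots> \<le> norm (A s) * norm (u s) * norm v"
      by (intro mult_right_mono norm_blinfun) simp
    also have "\<dots> \<le> K * R * norm v"
      using \<open>norm (A s) \<le> K\<close> R[OF that] K_nonneg by (intro mult_right_mono mult_mono) auto
    finally have "\<bar>inner (A s (u s)) v\<bar> \<le> K * R * norm v" .
    then show ?thesis
      using False by (simp add: g_def)
  qed (use K_nonneg R0 in \<open>simp add: g_def\<close>)
  have "integral {t..t+h} (\<lambda>s. inner (A s (u s)) v) = integral {t..t+h} g"
    by (rule integral_spike[OF \<open>negligible N\<close>]) (simp add: g_def)
  moreover have "g integrable_on {t..t+h}"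
    by (rule integrable_spike[OF int \<open>negligible N\<close>]) (simp add: g_def)
  from has_integral_bound_real[OF _ finite.emptyI integrable_integral[OF this], of "K * R * norm v"]
  have "\<bar>integral {t..t+h} g\<bar> \<le> K * R * norm v * h"
    using g_le K_nonneg R0 assms(2) by simp
  ultimately show ?thesis
    by (simp add: algebra_simps)
qed

definition Su_int :: "real \<Rightarrow> 'a" where
  "Su_int t = hintegral {0..t} (\<lambda>\<tau>. S (u \<tau>))"

lemma Su_int_has_derivative_within:
  assumes "0 \<le> t" "t \<le> T"
  shows "(Su_int has_vector_derivative S (u t)) (at t within {0..T})"
  unfolding Su_int_def using assms
  by (intro hintegral_has_vector_derivative continuous_on_subset_nonneg[OF continuous_Su]) auto

lemma Su_int_has_derivative_at:
  assumes "0 < t"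
  shows "(Su_int has_vector_derivative S (u t)) (at t)"
proof -
  have "at t within {0..t+1} = at t"
    using assms by (intro at_within_interior) auto
  then show ?thesis
    using Su_int_has_derivative_within[of t "t + 1"] assms by simp
qed

lemma continuous_Su_int: "continuous_on {0..T} Su_int"
  unfolding Su_int_def
  by (intro continuous_on_hintegral continuous_on_subset_nonneg[OF continuous_Su]) simp

lemma Su_int_diff:
  assumes "0 \<le> t" "0 \<le> h"
  shows "Su_int (t + h) - Su_int t = hintegral {t..t+h} (\<lambda>\<tau>. S (u \<tau>))"
  unfolding Su_int_def
  using hintegral_combine[OF assms(1) _ continuous_on_subset_nonneg[OF continuous_Su], of "t + h"] assms
  by simp

lemma weak_increment:
  assumes t: "0 \<le> t" and h: "0 < h" and v: "v \<in> DS"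
  shows "(\<lambda>s. inner (A s (u s)) v) integrable_on {t..t+h}"
    and "inner (u' (t+h) - u' t) v = - (inner (Su_int (t+h) - Su_int t) (S v)
      + integral {t..t+h} (\<lambda>s. inner (A s (u s)) v) + c * inner (u (t+h) - u t) v)"
proof -
  define f1 where "f1 s = inner (S (u s)) (S v)" for s
  define f2 where "f2 s = inner (A s (u s)) v" for s
  define f3 where "f3 s = c * inner (u' s) v" for s
  define F where "F s = f1 s + f2 s + f3 s" for s
  have "F integrable_on {0..t+h}" and "inner (u' (t+h)) v = inner u1 v - integral {0..t+h} F"
    using weak_equation[OF v, of "t + h"] t h unfolding F_def f1_def f2_def f3_def by auto
  moreover have "inner (u' t) v = inner u1 v - integral {0..t} F"
    using weak_equation[OF v t] unfolding F_def f1_def f2_def f3_def by auto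
  ultimately have F_int: "F integrable_on {t..t+h}"
    and u'_diff: "inner (u' (t+h) - u' t) v = - integral {t..t+h} F"
    using Henstock_Kurzweil_Integration.integral_combine[of 0 t "t + h" F] t h
    by (auto simp: inner_diff_left intro: integrable_subinterval_real)
  have f1: "(f1 has_integral inner (Su_int (t+h) - Su_int t) (S v)) {t..t+h}"
    unfolding Su_int_diff[OF t less_imp_le[OF h]] f1_def
    using inner_hintegral[OF continuous_on_subset_nonneg[OF continuous_Su t]]
    by (auto intro!: integrable_integral integrable_continuous_interval continuous_intros
        continuous_on_subset_nonneg[OF continuous_Su] t)
  have f3: "(f3 has_integral c * inner (u (t+h) - u t) v) {t..t+h}"
  proof -
    have "((\<lambda>s. inner (u' s) v) has_integral (inner (u (t+h)) v - inner (u t) v)) {t..t+h}"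
    proof (rule fundamental_theorem_of_calculus)
      fix x
      assume "x \<in> {t..t+h}"
      then have "(u has_vector_derivative u' x) (at x within {t..t+h})"
        using t by (intro has_vector_derivative_within_subset[OF u_has_derivative]) auto
      then show "((\<lambda>s. inner (u s) v) has_vector_derivative inner (u' x) v) (at x within {t..t+h})"
        by (rule bounded_linear.has_vector_derivative[OF bounded_linear_inner_left])
    qed (use h in simp)
    then show ?thesis
      unfolding f3_def by (simp add: has_integral_mult_right inner_diff_left)
  qed
  have "f2 = (\<lambda>s. F s - f1 s - f3 s)"
    unfolding F_def by auto
  then have "(f2 has_integral integral {t..t+h} F - inner (Su_int (t+h) - Su_int t) (S v)
      - c * inner (u (t+h) - u t) v) {t..t+h}"
    using has_integral_diff[OF has_integral_diff[OF integrable_integral[OF F_int] f1] f3] by simp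
  then show "f2 integrable_on {t..t+h}"
    and "inner (u' (t+h) - u' t) v = - (inner (Su_int (t+h) - Su_int t) (S v)
      + integral {t..t+h} f2 + c * inner (u (t+h) - u t) v)"
    unfolding u'_diff by (auto simp: integral_unique has_integral_integrable)
qed

lemma inner_diff_quot_u'_le:
  assumes t: "0 \<le> t" and h: "0 < h" and v: "v \<in> DS"
    and R: "\<And>\<tau>. \<tau> \<in> {t..t+h} \<Longrightarrow> norm (u \<tau>) \<le> R"
  shows "inner (diff_quot u' h t) v
    \<le> - inner (diff_quot Su_int h t) (S v) - c * inner (diff_quot u h t) v + K * R * norm v"
proof -
  define I where "I = integral {t..t+h} (\<lambda>s. inner (A s (u s)) v)"
  have "\<bar>I\<bar> \<le> K * h * R * norm v"
    unfolding I_def by (rule A_integral_bound[OF t h weak_increment(1)[OF t h v] R])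
  then have I_le: "- I / h \<le> K * R * norm v"
    using h by (simp add: field_simps abs_le_iff)
  have dq: "inner (diff_quot f h t) w = inner (f (t + h) - f t) w / h" for f :: "real \<Rightarrow> 'a" and w
    by (simp add: diff_quot_def)
  have "inner (diff_quot u' h t) v
      = - (inner (Su_int (t+h) - Su_int t) (S v) + I + c * inner (u (t+h) - u t) v) / h"
    unfolding dq weak_increment(2)[OF t h v] I_def ..
  also have "\<dots> = - inner (diff_quot Su_int h t) (S v) - I / h - c * inner (diff_quot u h t) v"
    unfolding dq using h by (simp add: field_simps)
  finally show ?thesis
    using I_le by linarith
qed

text \<open>Since \<open>u'\<close> and \<open>S u\<close> need not be differentiable, the energy is regularised by replacing
  them with difference quotients of \<open>u\<close> and of the primitive \<open>Su_int\<close> of \<open>S u\<close>.  The extra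
  terms of \<open>approx_energy_rate\<close> vanish as \<open>h \<rightarrow> 0\<close>.\<close>

definition approx_energy :: "real \<Rightarrow> real \<Rightarrow> real" where
  "approx_energy h t = damped_energy c (diff_quot u h t) (diff_quot Su_int h t) (u t)"

definition approx_energy_rate :: "real \<Rightarrow> real \<Rightarrow> real \<Rightarrow> real" where
  "approx_energy_rate L h t =
    (let z = diff_quot u h t; y = diff_quot Su_int h t in
       - c * (norm z)\<^sup>2 - c * (norm y)\<^sup>2 + c * inner y (y - S (u t)) + c * inner z (u' t - z)
       + c\<^sup>2 * inner (u t) (u' t - z) + K * (norm (u t) + L * h) * norm (2 *\<^sub>R z + c *\<^sub>R u t))"

text \<open>The weak equation is tested against \<open>v = 2 z + c u\<close>, which lies in the domain of \<open>S\<close>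
  although \<open>u'\<close> need not.\<close>

lemma approx_energy_has_derivative_le:
  assumes t: "0 < t" and h: "0 < h"
    and R: "\<And>\<tau>. \<tau> \<in> {t..t+h} \<Longrightarrow> norm (u \<tau>) \<le> norm (u t) + L * h"
  shows "\<exists>D. (approx_energy h has_real_derivative D) (at t) \<and> D \<le> approx_energy_rate L h t"
proof -
  define z where "z = diff_quot u h t"
  define y where "y = diff_quot Su_int h t"
  define z' where "z' = diff_quot u' h t"
  define y' where "y' = diff_quot (\<lambda>s. S (u s)) h t"
  define v where "v = 2 *\<^sub>R z + c *\<^sub>R u t"
  define D where "D = 2 * inner z' z + 2 * inner y' y + c * (inner z' (u t) + inner z (u' t))
    + c\<^sup>2 * inner (u' t) (u t)"
  have "(approx_energy h has_real_derivative D) (at t)"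
    unfolding approx_energy_def[abs_def] D_def z_def y_def z'_def y'_def
    using t h by (intro damped_energy_has_real_derivative diff_quot_has_vector_derivative
        u_has_derivative_at Su_int_has_derivative_at) auto
  moreover have "D \<le> approx_energy_rate L h t"
  proof -
    have u: "u t \<in> DS" "u (t + h) \<in> DS"
      using t h by (auto intro: u_in)
    then have z: "z \<in> DS"
      unfolding z_def diff_quot_def by (intro subspace_scale[OF DS_subspace] subspace_diff[OF DS_subspace])
    then have "v \<in> DS"
      unfolding v_def using u by (intro subspace_add[OF DS_subspace] subspace_scale[OF DS_subspace])
    have "S z = y'"
      unfolding z_def y'_def diff_quot_def
      using linear_op_on_scaleR[OF S_linear] linear_op_on_diff[OF S_linear u(2,1)] u
      by (simp add: subspace_diff[OF DS_subspace])
    then have Sv: "S v = 2 *\<^sub>R y' + c *\<^sub>R S (u t)"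
      unfolding v_def using linear_op_on_add[OF S_linear] linear_op_on_scaleR[OF S_linear] z u
      by (simp add: subspace_scale[OF DS_subspace])
    have "inner z' v \<le> - inner y (S v) - c * inner z v + K * (norm (u t) + L * h) * norm v"
      unfolding z'_def y_def z_def
      by (rule inner_diff_quot_u'_le[OF less_imp_le[OF t] h \<open>v \<in> DS\<close> R])
    then have "inner z' v \<le> - inner y (2 *\<^sub>R y' + c *\<^sub>R S (u t)) - c * inner z v
        + K * (norm (u t) + L * h) * norm v"
      by (simp only: Sv)
    then show ?thesis
      unfolding D_def approx_energy_rate_def Let_def z_def[symmetric] y_def[symmetric] v_def[symmetric]
      unfolding v_def power2_norm_eq_inner
      by (simp add: inner_add_right inner_diff_right inner_commute power2_eq_square algebra_simps)
  qed
  ultimately show ?thesis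
    by blast
qed

lemma continuous_diff_quot_u: "0 \<le> a \<Longrightarrow> 0 \<le> h \<Longrightarrow> continuous_on {a..b} (diff_quot u h)"
  by (intro continuous_on_diff_quot continuous_on_subset_nonneg[OF continuous_u])

lemma continuous_diff_quot_Su_int: "0 \<le> a \<Longrightarrow> 0 \<le> h \<Longrightarrow> continuous_on {a..b} (diff_quot Su_int h)"
  by (intro continuous_on_diff_quot continuous_on_subset[OF continuous_Su_int[of "b + h"]]) auto

lemma continuous_approx_energy:
  "0 \<le> a \<Longrightarrow> 0 \<le> h \<Longrightarrow> continuous_on {a..b} (approx_energy h)"
  unfolding approx_energy_def[abs_def] damped_energy_def
  by (intro continuous_intros continuous_diff_quot_u continuous_diff_quot_Su_int
      continuous_on_subset_nonneg[OF continuous_u])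

lemma continuous_approx_energy_rate:
  "0 \<le> a \<Longrightarrow> 0 \<le> h \<Longrightarrow> continuous_on {a..b} (approx_energy_rate L h)"
  unfolding approx_energy_rate_def[abs_def] Let_def
  by (intro continuous_intros continuous_diff_quot_u continuous_diff_quot_Su_int
      continuous_on_subset_nonneg[OF continuous_u] continuous_on_subset_nonneg[OF continuous_u']
      continuous_on_subset_nonneg[OF continuous_Su])

lemma approx_energy_diff_le_integral:
  assumes "0 \<le> a" "a \<le> b" "0 < h" and L: "\<And>x. x \<in> {0..b+h} \<Longrightarrow> norm (u' x) \<le> L"
  shows "approx_energy h b - approx_energy h a \<le> integral {a..b} (approx_energy_rate L h)"
proof (rule diff_le_integral_if_DERIV_le[where f = "approx_energy h" and g = "approx_energy_rate L h"])
  show "continuous_on {a..b} (approx_energy h)" "continuous_on {a..b} (approx_energy_rate L h)"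
    using assms by (intro continuous_approx_energy continuous_approx_energy_rate; simp)+
  fix s
  assume s: "a < s" "s < b"
  have "0 \<in> {0..b+h}"
    using assms by simp
  then have "0 \<le> L"
    using L norm_ge_zero order_trans by blast
  have "norm (u \<tau>) \<le> norm (u s) + L * h" if "\<tau> \<in> {s..s+h}" for \<tau>
  proof -
    have "norm (u \<tau> - u s) \<le> L * (\<tau> - s)"
      using that s assms by (intro norm_u_diff_le L) auto
    also have "\<dots> \<le> L * h"
      using that \<open>0 \<le> L\<close> by (intro mult_left_mono) auto
    finally show ?thesis
      using norm_triangle_sub[of "u \<tau>" "u s"] by linarith
  qed
  then show "\<exists>D. (approx_energy h has_real_derivative D) (at s) \<and> D \<le> approx_energy_rate L h s"
    using s assms by (intro approx_energy_has_derivative_le) auto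
qed (use assms in auto)

definition energy :: "real \<Rightarrow> real" where
  "energy t = damped_energy c (u' t) (S (u t)) (u t)"

definition energy_rate :: "real \<Rightarrow> real" where
  "energy_rate t = damped_energy_rate c K (u' t) (S (u t)) (u t)"

lemma diff_quot_u_LIMSEQ: "0 \<le> t \<Longrightarrow> (\<lambda>n. diff_quot u (1 / (real n + 1)) t) \<longlonglongrightarrow> u' t"
  by (intro diff_quot_LIMSEQ[OF u_has_derivative] LIMSEQ_one_over_real_add_1) auto

lemma diff_quot_Su_int_LIMSEQ:
  "0 \<le> t \<Longrightarrow> (\<lambda>n. diff_quot Su_int (1 / (real n + 1)) t) \<longlonglongrightarrow> S (u t)"
  by (intro diff_quot_LIMSEQ[OF Su_int_has_derivative_within[of t "t + 1"]] LIMSEQ_one_over_real_add_1)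
    (auto simp: field_simps)

lemma approx_energy_LIMSEQ: "0 \<le> t \<Longrightarrow> (\<lambda>n. approx_energy (1 / (real n + 1)) t) \<longlonglongrightarrow> energy t"
  unfolding approx_energy_def energy_def damped_energy_def
  by (intro tendsto_intros diff_quot_u_LIMSEQ diff_quot_Su_int_LIMSEQ)

lemma approx_energy_rate_LIMSEQ:
  assumes "0 \<le> t"
  shows "(\<lambda>n. approx_energy_rate L (1 / (real n + 1)) t) \<longlonglongrightarrow> energy_rate t"
proof -
  have "(\<lambda>n. approx_energy_rate L (1 / (real n + 1)) t) \<longlonglongrightarrow>
     - c * (norm (u' t))\<^sup>2 - c * (norm (S (u t)))\<^sup>2 + c * inner (S (u t)) (S (u t) - S (u t))
     + c * inner (u' t) (u' t - u' t) + c\<^sup>2 * inner (u t) (u' t - u' t)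
     + K * (norm (u t) + L * 0) * norm (2 *\<^sub>R u' t + c *\<^sub>R u t)"
    unfolding approx_energy_rate_def Let_def
    by (intro tendsto_intros diff_quot_u_LIMSEQ diff_quot_Su_int_LIMSEQ LIMSEQ_one_over_real_add_1 assms)
  then show ?thesis
    unfolding energy_rate_def damped_energy_rate_def by simp
qed

lemma norm_diff_quot_Su_int_le:
  assumes "0 \<le> t" "0 < h" and M: "\<And>x. x \<in> {t..t+h} \<Longrightarrow> norm (S (u x)) \<le> M"
  shows "norm (diff_quot Su_int h t) \<le> M"
proof -
  have "norm (hintegral {t..t+h} (\<lambda>\<tau>. S (u \<tau>))) \<le> M * (t + h - t)"
    using assms by (intro norm_hintegral_le continuous_on_subset_nonneg[OF continuous_Su]) auto
  then show ?thesis
    unfolding diff_quot_def Su_int_diff[OF assms(1) less_imp_le[OF assms(2)]]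
    using assms(2) by (simp add: field_simps)
qed

lemma norm_diff_quot_u_le:
  assumes "0 \<le> t" "0 < h" and L: "\<And>x. x \<in> {t..t+h} \<Longrightarrow> norm (u' x) \<le> L"
  shows "norm (diff_quot u h t) \<le> L"
proof -
  have "norm (u (t + h) - u t) \<le> L * (t + h - t)"
    using assms by (intro norm_u_diff_le) auto
  then show ?thesis
    unfolding diff_quot_def norm_scaleR using assms(2) by (simp add: field_simps)
qed

lemma abs_approx_energy_rate_le:
  assumes t: "0 \<le> t" "t \<le> T" and h: "0 < h" "h \<le> 1"
    and L: "\<And>x. x \<in> {0..T+1} \<Longrightarrow> norm (u' x) \<le> L"
    and Ms: "\<And>x. x \<in> {0..T+1} \<Longrightarrow> norm (S (u x)) \<le> Ms"
    and Mu: "\<And>x. x \<in> {0..T+1} \<Longrightarrow> norm (u x) \<le> Mu"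
  shows "\<bar>approx_energy_rate L h t\<bar> \<le> (6 * c + 2 * c\<^sup>2 + 2 * K * (2 + c)) * (L + Ms + Mu)\<^sup>2"
proof -
  have "t \<in> {0..T+1}"
    using t by simp
  then have nonneg: "0 \<le> L" "0 \<le> Ms" "0 \<le> Mu"
    using L Ms Mu norm_ge_zero order_trans by blast+
  have "norm (diff_quot u h t) \<le> L"
    using t h L by (intro norm_diff_quot_u_le) auto
  moreover have "norm (diff_quot Su_int h t) \<le> Ms"
    using t h Ms by (intro norm_diff_quot_Su_int_le) auto
  moreover have "norm (u t) \<le> Mu" "norm (u' t) \<le> L" "norm (S (u t)) \<le> Ms" "L * h \<le> L"
    using L Ms Mu \<open>t \<in> {0..T+1}\<close> h nonneg by (auto simp: mult_left_le)
  ultimately show ?thesis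
    unfolding approx_energy_rate_def Let_def using nonneg h c_pos K_nonneg
    by (intro abs_approx_rate_le) auto
qed

lemma continuous_energy: "continuous_on {0..} energy"
  unfolding energy_def[abs_def] damped_energy_def
  by (intro continuous_intros continuous_u continuous_u' continuous_Su)

lemma continuous_energy_rate: "continuous_on {0..} energy_rate"
  unfolding energy_rate_def[abs_def] damped_energy_rate_def
  by (intro continuous_intros continuous_u continuous_u' continuous_Su)

lemma energy_diff_le_integral:
  assumes "0 \<le> a" "a \<le> b"
  shows "energy b - energy a \<le> integral {a..b} energy_rate"
proof -
  obtain L where L: "\<And>x. x \<in> {0..b+1} \<Longrightarrow> norm (u' x) \<le> L"
    using bounded_on_interval[OF continuous_u'] by blast
  obtain Ms where Ms: "\<And>x. x \<in> {0..b+1} \<Longrightarrow> norm (S (u x)) \<le> Ms"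
    using bounded_on_interval[OF continuous_Su] by blast
  obtain Mu where Mu: "\<And>x. x \<in> {0..b+1} \<Longrightarrow> norm (u x) \<le> Mu"
    using bounded_on_interval[OF continuous_u] by blast
  define h where "h n = 1 / (real n + 1)" for n
  have h: "0 < h n" "h n \<le> 1" for n
    unfolding h_def by (auto simp: field_simps)
  define M where "M = (6 * c + 2 * c\<^sup>2 + 2 * K * (2 + c)) * (L + Ms + Mu)\<^sup>2"
  have le: "approx_energy (h n) b - approx_energy (h n) a \<le> integral {a..b} (approx_energy_rate L (h n))"
    for n
    using assms h[of n] L by (intro approx_energy_diff_le_integral) auto
  have lim_energy: "(\<lambda>n. approx_energy (h n) b - approx_energy (h n) a) \<longlonglongrightarrow> energy b - energy a"
    unfolding h_def using assms by (intro tendsto_intros approx_energy_LIMSEQ) auto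
  have lim_rate: "(\<lambda>n. integral {a..b} (approx_energy_rate L (h n))) \<longlonglongrightarrow> integral {a..b} energy_rate"
  proof (rule dominated_convergence(2)[where h = "\<lambda>_. M"])
    show "approx_energy_rate L (h n) integrable_on {a..b}" for n
      using assms h[of n] by (intro integrable_continuous_interval continuous_approx_energy_rate) auto
    show "(\<lambda>_. M) integrable_on {a..b}"
      by (rule integrable_const_ivl)
    show "norm (approx_energy_rate L (h n) x) \<le> M" if "x \<in> {a..b}" for n x
      using that assms h[of n] L Ms Mu unfolding real_norm_def M_def
      by (intro abs_approx_energy_rate_le[where T = b]) auto
    show "(\<lambda>n. approx_energy_rate L (h n) x) \<longlonglongrightarrow> energy_rate x" if "x \<in> {a..b}" for x
      unfolding h_def using that assms by (intro approx_energy_rate_LIMSEQ) auto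
  qed
  show ?thesis
    by (rule LIMSEQ_le[OF lim_energy lim_rate]) (use le in auto)
qed

lemma energy_exp_decay:
  assumes b: "0 < b" and coercive: "\<And>v. v \<in> DS \<Longrightarrow> b * (norm v)\<^sup>2 \<le> (norm (S v))\<^sup>2"
    and d: "0 < decay_rate b c K" and st: "0 \<le> s" "s \<le> t"
  shows "energy t \<le> 2 * exp (- (ln 2 * decay_rate b c K) * (t - s)) * energy s"
proof (rule integral_inequality_imp_exp_decay[OF continuous_energy _ d _ st])
  show "0 \<le> energy t" for t
    unfolding energy_def by (rule damped_energy_nonneg)
  fix a b' :: real
  assume ab: "0 \<le> a" "a \<le> b'"
  have "energy b' - energy a \<le> integral {a..b'} energy_rate"
    using ab by (rule energy_diff_le_integral)
  also have "\<dots> \<le> integral {a..b'} (\<lambda>x. - decay_rate b c K * energy x)"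
    using ab b coercive K_nonneg u_in unfolding energy_rate_def energy_def
    by (intro integral_le integrable_continuous_interval damped_energy_rate_le
        continuous_on_subset_nonneg[OF continuous_energy_rate, unfolded energy_rate_def]
        continuous_intros continuous_on_subset_nonneg[OF continuous_energy, unfolded energy_def]) auto
  finally show "energy b' - energy a \<le> - decay_rate b c K * integral {a..b'} energy"
    by simp
qed

lemma solution_exp_decay:
  assumes b: "0 < b" and coercive: "\<And>v. v \<in> DS \<Longrightarrow> b * (norm v)\<^sup>2 \<le> (norm (S v))\<^sup>2"
    and d: "0 < decay_rate b c K" and st: "0 \<le> s" "s \<le> t"
  shows "(norm (S (u t)))\<^sup>2 + (norm (u' t))\<^sup>2
    \<le> (6 * (2 + 3 * c\<^sup>2 / (4 * b))) * ((norm (S (u s)))\<^sup>2 + (norm (u' s))\<^sup>2)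
      * exp (- (ln 2 * decay_rate b c K) * (t - s))"
proof -
  define e where "e = exp (- (ln 2 * decay_rate b c K) * (t - s))"
  have "(norm (S (u t)))\<^sup>2 + (norm (u' t))\<^sup>2 \<le> 3 * energy t"
    unfolding energy_def by (rule norm_sq_le_damped_energy)
  also have "\<dots> \<le> 3 * (2 * e * energy s)"
    unfolding e_def using energy_exp_decay[OF assms] by linarith
  also have "\<dots> \<le> 3 * (2 * e * ((2 + 3 * c\<^sup>2 / (4 * b)) * ((norm (S (u s)))\<^sup>2 + (norm (u' s))\<^sup>2)))"
    unfolding energy_def e_def using b c_pos coercive[OF u_in[OF st(1)]]
    by (intro mult_left_mono damped_energy_le) auto
  also have "\<dots> = (6 * (2 + 3 * c\<^sup>2 / (4 * b))) * ((norm (S (u s)))\<^sup>2 + (norm (u' s))\<^sup>2) * e"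
    by (simp only: mult_ac)
  finally show ?thesis
    unfolding e_def .
qed

end

theorem corollary4p2:
  fixes DB DS :: "'a::{real_inner,complete_space} set"
    and B S :: "'a \<Rightarrow> 'a"
    and A :: "real \<Rightarrow> 'a \<Rightarrow>\<^sub>L 'a"
    and b c K :: real
  assumes B_sa: "self_adjoint_op DB B"
    and b_pos: "b > 0"
    and coercive: "\<forall>v\<in>DB. inner (B v) v \<ge> b * (norm v)\<^sup>2"
    and S_sqrt: "is_sqrt_op DS S DB B"
    and A_meas: "\<forall>x. (\<lambda>t. blinfun_apply (A t) x) \<in> borel_measurable (restrict_space lborel {0..})"
    and A_bound: "AE t in lborel. 0 \<le> t \<longrightarrow> norm (A t) \<le> K"
    and c_pos: "c > 0"
    and small: "K < c * sqrt (b + c\<^sup>2 / 4) - c\<^sup>2 / 2"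
  shows "\<exists>\<delta>>0. \<exists>M>0. \<forall>u0 u1 u u'. u0 \<in> DS \<longrightarrow> mild_solution DS S A c u0 u1 u u' \<longrightarrow>
           (\<forall>s t. 0 \<le> s \<longrightarrow> s \<le> t \<longrightarrow>
              (norm (S (u t)))\<^sup>2 + (norm (u' t))\<^sup>2
                \<le> M * ((norm (S (u s)))\<^sup>2 + (norm (u' s))\<^sup>2) * exp (- \<delta> * (t - s)))"
proof (intro exI conjI allI impI)
  have S_linear: "linear_op_on DS S"
    using S_sqrt by (simp add: is_sqrt_op_def self_adjoint_op_def)
  have S_coercive: "b * (norm v)\<^sup>2 \<le> (norm (S v))\<^sup>2" if "v \<in> DS" for v
    using S_sqrt coercive that by (rule sqrt_op_coercive)
  have decay: "0 < decay_rate b c K"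
    using b_pos c_pos small by (rule decay_rate_pos)
  then show "0 < ln 2 * decay_rate b c K"
    by simp
  show "0 < 6 * (2 + 3 * c\<^sup>2 / (4 * b))"
    using b_pos by (simp add: add_pos_nonneg)
  fix u0 u1 u u' and s t :: real
  assume "mild_solution DS S A c u0 u1 u u'" "0 \<le> s" "s \<le> t"
  then interpret damped_wave_solution DS S A c K u0 u1 u u'
    using S_linear A_bound c_pos by unfold_locales
  show "(norm (S (u t)))\<^sup>2 + (norm (u' t))\<^sup>2 \<le> 6 * (2 + 3 * c\<^sup>2 / (4 * b))
      * ((norm (S (u s)))\<^sup>2 + (norm (u' s))\<^sup>2) * exp (- (ln 2 * decay_rate b c K) * (t - s))"
    using solution_exp_decay[OF b_pos S_coercive decay \<open>0 \<le> s\<close> \<open>s \<le> t\<close>] .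
qed

end
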